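(* Let $I\subseteq\mathbb{R}$ be an interval and let $f,g: I\to\mathbb{R}$ be twice continuously differentiable with $g''(t)>0$ for all $t\in I$. For $n\ge 2$, positive weights $p_1,\dots,p_n$ with $\sum_{i=1}^n p_i=1$, and points $x_1,\dots,x_n\in I$ not all equal, put $$\Lambda_{f,g}(p,x)=\frac{\sum_{i=1}^n p_i f(x_i)-f\left(\sum_{i=1}^n p_i x_i\right)}{\sum_{i=1}^n p_i g(x_i)-g\left(\sum_{i=1}^n p_i x_i\right)}.$$ Then the inequality $\min\{x_1,\dots,x_n\}\le \Lambda_{f,g}(p,x)\le \max\{x_1,\dots,x_n\}$ holds for every $n\ge 2$, every such positive weight sequence $p$ and every such $x_1,\dots,x_n\in I$ (not all equal) if and only if $f''(t)=t\,g''(t)$ for every $t\in I$.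
   Context: Since $g''>0$, $g$ is strictly convex on $I$, so the denominator (a Jensen functional of $g$) is strictly positive when the $x_i$ are not all equal. *)

theory Defs
  imports "HOL-Analysis.Analysis"
begin

definition Lambda :: "(real \<Rightarrow> real) \<Rightarrow> (real \<Rightarrow> real) \<Rightarrow> nat \<Rightarrow> (nat \<Rightarrow> real) \<Rightarrow> (nat \<Rightarrow> real) \<Rightarrow> real" where
  "Lambda f g n p x =
     ((\<Sum>i<n. p i * f (x i)) - f (\<Sum>i<n. p i * x i)) /
     ((\<Sum>i<n. p i * g (x i)) - g (\<Sum>i<n. p i * x i))"

end

theory Submission
  imports Defs
begin

text \<open>
  For a constant \<open>k\<close>, the sign of \<open>\<Lambda> - k\<close> is that of the Jensen gap of \<open>f - k g\<close>, whose
  second derivative is \<open>(\<rho> - k) g''\<close> with \<open>\<rho> = f''/g''\<close>; a function with positive second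
  derivative on the interior of an interval has positive Jensen gap, because it lies strictly above
  its tangent lines. If \<open>\<rho>(t) = t\<close>, take \<open>k = min x\<close> or \<open>k = max x\<close> on the interval spanned by the
  points to get \<open>min x < \<Lambda> < max x\<close>. Conversely, if \<open>\<rho>(t\<^sub>0) > t\<^sub>0\<close>, continuity of \<open>\<rho>\<close> gives a short
  interval \<open>[a, b]\<close> near \<open>t\<^sub>0\<close> on which \<open>\<rho> > b\<close>, so the two-point quotient for \<open>a, b\<close> exceeds
  \<open>b = max\<close>; the case \<open>\<rho>(t\<^sub>0) < t\<^sub>0\<close> is symmetric.
\<close>

definition has_second_derivative_on ::
    "(real \<Rightarrow> real) \<Rightarrow> (real \<Rightarrow> real) \<Rightarrow> (real \<Rightarrow> real) \<Rightarrow> real set \<Rightarrow> bool" where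
  "has_second_derivative_on f f' f'' S \<longleftrightarrow>
     (\<forall>t\<in>S. (f has_real_derivative f' t) (at t within S) \<and> (f' has_real_derivative f'' t) (at t within S))"

lemma has_second_derivative_on_subset:
  assumes "has_second_derivative_on f f' f'' S" and "T \<subseteq> S"
  shows "has_second_derivative_on f f' f'' T"
  using assms unfolding has_second_derivative_on_def by (meson has_field_derivative_subset subsetD)

lemma has_second_derivative_on_lincomb:
  assumes "has_second_derivative_on f f' f'' S" and "has_second_derivative_on g g' g'' S"
  shows "has_second_derivative_on (\<lambda>t. a * f t + b * g t) (\<lambda>t. a * f' t + b * g' t)
           (\<lambda>t. a * f'' t + b * g'' t) S"
  using assms unfolding has_second_derivative_on_def by (auto intro!: derivative_eq_intros)

definition jensen_gap :: "(real \<Rightarrow> real) \<Rightarrow> 'i set \<Rightarrow> ('i \<Rightarrow> real) \<Rightarrow> ('i \<Rightarrow> real) \<Rightarrow> real" where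
  "jensen_gap h A p x = (\<Sum>i\<in>A. p i * h (x i)) - h (\<Sum>i\<in>A. p i * x i)"

lemma Lambda_eq_jensen_gap_quotient:
  "Lambda f g n p x = jensen_gap f {..<n} p x / jensen_gap g {..<n} p x"
  unfolding Lambda_def jensen_gap_def ..

lemma jensen_gap_lincomb:
  "jensen_gap (\<lambda>t. a * f t + b * g t) A p x = a * jensen_gap f A p x + b * jensen_gap g A p x"
  unfolding jensen_gap_def by (simp add: algebra_simps sum.distrib sum_distrib_left)

definition nonconstant_sample :: "nat \<Rightarrow> (nat \<Rightarrow> real) \<Rightarrow> (nat \<Rightarrow> real) \<Rightarrow> real set \<Rightarrow> bool" where
  "nonconstant_sample n p x S \<longleftrightarrow>
     (\<forall>i<n. p i > 0) \<and> (\<Sum>i<n. p i) = 1 \<and> (\<forall>i<n. x i \<in> S) \<and> (\<exists>i<n. \<exists>j<n. x i \<noteq> x j)"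

lemma atLeastAtMost_subset_interval:
  fixes S :: "real set"
  assumes "is_interval S" and "a \<in> S" and "b \<in> S"
  shows "{a..b} \<subseteq> S"
  using interval_subset_is_interval[OF assms(1), of a b] assms(2,3) by (simp add: cbox_interval)

lemma DERIV_within_pos_imp_strict_mono_on:
  fixes h h' :: "real \<Rightarrow> real"
  assumes S: "is_interval S"
    and deriv: "\<And>t. t \<in> S \<Longrightarrow> (h has_real_derivative h' t) (at t within S)"
    and pos: "\<And>t. t \<in> interior S \<Longrightarrow> h' t > 0"
  shows "strict_mono_on S h"
proof (rule strict_mono_onI)
  fix u v assume uv: "u \<in> S" "v \<in> S" "u < v"
  have sub: "{u..v} \<subseteq> S" using atLeastAtMost_subset_interval[OF S uv(1,2)] .
  then have "{u<..<v} \<subseteq> interior S" by (intro interior_maximal) auto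
  moreover have "continuous_on S h"
    using deriv by (meson DERIV_continuous continuous_on_eq_continuous_within)
  ultimately have "continuous_on {u..v} h" using sub continuous_on_subset by blast
  moreover have "\<exists>y. (h has_real_derivative y) (at t) \<and> y > 0" if "u < t" "t < v" for t
  proof -
    have "t \<in> interior S" using that \<open>{u<..<v} \<subseteq> interior S\<close> by auto
    then show ?thesis using deriv[of t] pos[of t] at_within_interior[of t S] interior_subset by auto
  qed
  ultimately show "h u < h v" using DERIV_pos_imp_increasing_open[OF uv(3)] by blast
qed

lemma strict_mono_on_deriv_imp_above_tangent:
  fixes h h' :: "real \<Rightarrow> real"
  assumes S: "is_interval S"
    and deriv: "\<And>t. t \<in> S \<Longrightarrow> (h has_real_derivative h' t) (at t within S)"
    and mono: "strict_mono_on S h'"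
    and m: "m \<in> S" and y: "y \<in> S" and "y \<noteq> m"
  shows "h m + h' m * (y - m) < h y"
proof -
  define G where "G t = h t - h' m * t" for t
  have dG: "(G has_real_derivative h' t - h' m) (at t within T)" if "T \<subseteq> S" "t \<in> T" for T t
    unfolding G_def using has_field_derivative_subset[OF deriv that(1)] that
    by (auto intro!: derivative_eq_intros)
  consider "m < y" | "y < m" using \<open>y \<noteq> m\<close> by linarith
  then have "G m < G y"
  proof cases
    case 1
    have "strict_mono_on {m..y} G"
    proof (rule DERIV_within_pos_imp_strict_mono_on[OF is_interval_cc dG])
      show "{m..y} \<subseteq> S" using atLeastAtMost_subset_interval[OF S m y] .
      show "h' t - h' m > 0" if "t \<in> interior {m..y}" for t
        using that \<open>{m..y} \<subseteq> S\<close> by (auto intro!: strict_mono_onD[OF mono m])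
    qed
    from strict_mono_onD[OF this, of m y] show ?thesis using 1 by simp
  next
    case 2
    have "strict_mono_on {y..m} (\<lambda>t. - G t)"
    proof (rule DERIV_within_pos_imp_strict_mono_on[OF is_interval_cc DERIV_minus[OF dG]])
      show "{y..m} \<subseteq> S" using atLeastAtMost_subset_interval[OF S y m] .
      show "- (h' t - h' m) > 0" if "t \<in> interior {y..m}" for t
        using that \<open>{y..m} \<subseteq> S\<close> by (auto intro!: strict_mono_onD[OF mono _ m])
    qed
    from strict_mono_onD[OF this, of y m] show ?thesis using 2 by simp
  qed
  then show ?thesis unfolding G_def by (simp add: algebra_simps)
qed

lemma jensen_gap_pos:
  fixes h h' h'' :: "real \<Rightarrow> real" and p x :: "'i \<Rightarrow> real"
  assumes S: "is_interval S" and h: "has_second_derivative_on h h' h'' S"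
    and pos: "\<And>t. t \<in> interior S \<Longrightarrow> h'' t > 0"
    and A: "finite A" and p: "\<And>i. i \<in> A \<Longrightarrow> p i > 0" and p1: "(\<Sum>i\<in>A. p i) = 1"
    and x: "\<And>i. i \<in> A \<Longrightarrow> x i \<in> S" and ij: "i \<in> A" "j \<in> A" "x i \<noteq> x j"
  shows "jensen_gap h A p x > 0"
proof -
  define \<mu> where "\<mu> = (\<Sum>i\<in>A. p i * x i)"
  have "(\<Sum>i\<in>A. p i *\<^sub>R x i) \<in> S"
    using p x by (intro convex_sum[OF A is_interval_convex[OF S] p1]) (auto intro: less_imp_le)
  then have \<mu>: "\<mu> \<in> S" unfolding \<mu>_def by simp
  have deriv: "\<And>t. t \<in> S \<Longrightarrow> (h has_real_derivative h' t) (at t within S)"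
    using h unfolding has_second_derivative_on_def by blast
  have mono: "strict_mono_on S h'"
    using h pos unfolding has_second_derivative_on_def
    by (intro DERIV_within_pos_imp_strict_mono_on[OF S]) auto
  have tangent: "h \<mu> + h' \<mu> * (y - \<mu>) < h y" if "y \<in> S" "y \<noteq> \<mu>" for y
    using strict_mono_on_deriv_imp_above_tangent[OF S deriv mono \<mu> that] .
  \<comment> \<open>The Jensen gap is the weighted sum of the deficits of the tangent line at the mean.\<close>
  define d where "d i = h (x i) - (h \<mu> + h' \<mu> * (x i - \<mu>))" for i
  have "(\<Sum>i\<in>A. p i * d i) = (\<Sum>i\<in>A. p i * h (x i)) - h \<mu> * (\<Sum>i\<in>A. p i)
      - h' \<mu> * ((\<Sum>i\<in>A. p i * x i) - \<mu> * (\<Sum>i\<in>A. p i))"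
    unfolding d_def by (simp add: algebra_simps sum_subtractf sum.distrib sum_distrib_left)
  then have "jensen_gap h A p x = (\<Sum>i\<in>A. p i * d i)"
    using p1 unfolding jensen_gap_def \<mu>_def by simp
  also have "\<dots> > 0"
  proof -
    obtain k where k: "k \<in> A" "x k \<noteq> \<mu>" using ij by metis
    show ?thesis
    proof (rule sum_pos2[OF A k(1)])
      show "p k * d k > 0" using p[OF k(1)] tangent[OF x[OF k(1)] k(2)] k unfolding d_def by simp
      show "p i * d i \<ge> 0" if "i \<in> A" for i
        using p[OF that] tangent[OF x[OF that]] unfolding d_def
        by (cases "x i = \<mu>") (auto intro: less_imp_le)
    qed
  qed
  finally show ?thesis .
qed

lemma lincomb_jensen_gap_pos:
  assumes S: "is_interval S"
    and f: "has_second_derivative_on f f' f'' S" and g: "has_second_derivative_on g g' g'' S"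
    and pos: "\<And>t. t \<in> interior S \<Longrightarrow> a * f'' t + b * g'' t > 0"
    and sample: "nonconstant_sample n p x S"
  shows "a * jensen_gap f {..<n} p x + b * jensen_gap g {..<n} p x > 0"
proof -
  from sample obtain i j where "i < n" "j < n" "x i \<noteq> x j"
    unfolding nonconstant_sample_def by blast
  with sample show ?thesis
    unfolding jensen_gap_lincomb[symmetric] nonconstant_sample_def
    by (intro jensen_gap_pos[OF S has_second_derivative_on_lincomb[OF f g] pos]) auto
qed

lemma less_Lambda:
  assumes S: "is_interval S"
    and f: "has_second_derivative_on f f' f'' S" and g: "has_second_derivative_on g g' g'' S"
    and g_pos: "\<And>t. t \<in> interior S \<Longrightarrow> g'' t > 0"
    and gt: "\<And>t. t \<in> interior S \<Longrightarrow> f'' t > k * g'' t"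
    and sample: "nonconstant_sample n p x S"
  shows "k < Lambda f g n p x"
proof -
  have "0 * jensen_gap f {..<n} p x + 1 * jensen_gap g {..<n} p x > 0"
    using g_pos by (intro lincomb_jensen_gap_pos[OF S f g _ sample]) simp
  moreover have "1 * jensen_gap f {..<n} p x + (- k) * jensen_gap g {..<n} p x > 0"
    using gt by (intro lincomb_jensen_gap_pos[OF S f g _ sample]) simp
  ultimately show ?thesis by (simp add: Lambda_eq_jensen_gap_quotient less_divide_eq)
qed

lemma Lambda_less:
  assumes S: "is_interval S"
    and f: "has_second_derivative_on f f' f'' S" and g: "has_second_derivative_on g g' g'' S"
    and g_pos: "\<And>t. t \<in> interior S \<Longrightarrow> g'' t > 0"
    and less: "\<And>t. t \<in> interior S \<Longrightarrow> f'' t < k * g'' t"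
    and sample: "nonconstant_sample n p x S"
  shows "Lambda f g n p x < k"
proof -
  have "0 * jensen_gap f {..<n} p x + 1 * jensen_gap g {..<n} p x > 0"
    using g_pos by (intro lincomb_jensen_gap_pos[OF S f g _ sample]) simp
  moreover have "(- 1) * jensen_gap f {..<n} p x + k * jensen_gap g {..<n} p x > 0"
    using less by (intro lincomb_jensen_gap_pos[OF S f g _ sample]) simp
  ultimately show ?thesis by (simp add: Lambda_eq_jensen_gap_quotient divide_less_eq)
qed

lemma Min_less_Lambda_less_Max:
  assumes I: "is_interval I"
    and f: "has_second_derivative_on f f' f'' I" and g: "has_second_derivative_on g g' g'' I"
    and g_pos: "\<And>t. t \<in> I \<Longrightarrow> g'' t > 0"
    and ratio: "\<And>t. t \<in> I \<Longrightarrow> f'' t = t * g'' t"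
    and sample: "nonconstant_sample n p x I"
  shows "Min (x ` {..<n}) < Lambda f g n p x \<and> Lambda f g n p x < Max (x ` {..<n})"
proof -
  define m M where "m = Min (x ` {..<n})" and "M = Max (x ` {..<n})"
  have "n > 0" and x: "\<And>i. i < n \<Longrightarrow> x i \<in> I"
    using sample unfolding nonconstant_sample_def by auto
  then have "finite (x ` {..<n})" "x ` {..<n} \<noteq> {}" by auto
  then have "m \<in> x ` {..<n}" "M \<in> x ` {..<n}" and mM: "\<And>i. i < n \<Longrightarrow> x i \<in> {m..M}"
    unfolding m_def M_def by auto
  then have sub: "{m..M} \<subseteq> I" using x atLeastAtMost_subset_interval[OF I] by blast
  have sample': "nonconstant_sample n p x {m..M}"
    using sample mM unfolding nonconstant_sample_def by auto
  note fS = has_second_derivative_on_subset[OF f sub]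
    and gS = has_second_derivative_on_subset[OF g sub]
  have interior: "t \<in> I" "m < t" "t < M" if "t \<in> interior {m..M}" for t
    using that sub by auto
  have "m < Lambda f g n p x"
  proof (rule less_Lambda[OF is_interval_cc fS gS _ _ sample'])
    fix t assume "t \<in> interior {m..M}"
    note t = interior[OF this]
    show "g'' t > 0" using g_pos[OF t(1)] .
    show "f'' t > m * g'' t" using ratio[OF t(1)] mult_strict_right_mono[OF t(2) g_pos[OF t(1)]] by simp
  qed
  moreover have "Lambda f g n p x < M"
  proof (rule Lambda_less[OF is_interval_cc fS gS _ _ sample'])
    fix t assume "t \<in> interior {m..M}"
    note t = interior[OF this]
    show "g'' t > 0" using g_pos[OF t(1)] .
    show "f'' t < M * g'' t" using ratio[OF t(1)] mult_strict_right_mono[OF t(3) g_pos[OF t(1)]] by simp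
  qed
  ultimately show ?thesis unfolding m_def M_def ..
qed

lemma nonconstant_sample_two_points:
  assumes "a < b" "a \<in> S" "b \<in> S"
  shows "nonconstant_sample 2 (\<lambda>_. 1/2) (\<lambda>i. if i = 0 then a else b) S"
  using assms unfolding nonconstant_sample_def by (auto simp: less_2_cases_iff)

lemma image_two_points: "(\<lambda>i::nat. if i = 0 then a else b) ` {..<2} = {a, b}"
  by (auto simp: less_2_cases_iff image_iff)

lemma exists_interval_near:
  fixes I :: "real set" and \<rho> :: "real \<Rightarrow> real"
  assumes I: "is_interval I" and nontrivial: "\<exists>a\<in>I. \<exists>b\<in>I. a < b"
    and cont: "continuous_on I \<rho>" and t0: "t0 \<in> I" and e: "e > 0"
  shows "\<exists>a b. a < b \<and> a \<in> I \<and> b \<in> I \<and> (\<forall>t\<in>{a..b}. \<bar>t - t0\<bar> < e \<and> \<bar>\<rho> t - \<rho> t0\<bar> < e)"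
proof -
  obtain d where d: "d > 0" and near: "\<And>t. t \<in> I \<Longrightarrow> \<bar>t - t0\<bar> < d \<Longrightarrow> \<bar>\<rho> t - \<rho> t0\<bar> < e"
    using cont t0 e unfolding continuous_on_iff dist_real_def by blast
  define \<delta> where "\<delta> = min d e"
  have "\<delta> > 0" using d e unfolding \<delta>_def by simp
  obtain a0 b0 where ab0: "a0 \<in> I" "b0 \<in> I" "a0 < b0" using nontrivial by blast
  obtain a b where ab: "a < b" "a \<in> I" "b \<in> I" "t0 \<in> {a..b}" "b - a < \<delta>"
  proof (cases "t0 < b0")
    case True
    let ?b = "min b0 (t0 + \<delta> / 2)"
    have "?b \<in> {t0..b0}" using True \<open>\<delta> > 0\<close> by auto
    then have "?b \<in> I" using atLeastAtMost_subset_interval[OF I t0 ab0(2)] by blast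
    then show ?thesis using that[of t0 ?b] True \<open>\<delta> > 0\<close> t0 by auto
  next
    case False
    let ?a = "max a0 (t0 - \<delta> / 2)"
    have "?a \<in> {a0..t0}" using False ab0(3) \<open>\<delta> > 0\<close> by auto
    then have "?a \<in> I" using atLeastAtMost_subset_interval[OF I ab0(1) t0] by blast
    then show ?thesis using that[of ?a t0] False ab0(3) \<open>\<delta> > 0\<close> t0 by auto
  qed
  have "\<bar>t - t0\<bar> < e \<and> \<bar>\<rho> t - \<rho> t0\<bar> < e" if "t \<in> {a..b}" for t
  proof -
    have "\<bar>t - t0\<bar> < \<delta>" using that ab(4,5) by auto
    moreover have "t \<in> I" using that atLeastAtMost_subset_interval[OF I ab(2,3)] by auto
    ultimately show ?thesis using near unfolding \<delta>_def by auto
  qed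
  with ab show ?thesis by blast
qed

lemma exists_interval_off_diagonal:
  fixes I :: "real set" and \<rho> :: "real \<Rightarrow> real"
  assumes I: "is_interval I" and nontrivial: "\<exists>a\<in>I. \<exists>b\<in>I. a < b"
    and cont: "continuous_on I \<rho>" and t0: "t0 \<in> I" and off: "\<rho> t0 \<noteq> t0"
  shows "\<exists>a b. a < b \<and> a \<in> I \<and> b \<in> I \<and> ((\<forall>t\<in>{a..b}. b < \<rho> t) \<or> (\<forall>t\<in>{a..b}. \<rho> t < a))"
proof -
  define e where "e = \<bar>\<rho> t0 - t0\<bar> / 2"
  have "e > 0" using off unfolding e_def by simp
  then obtain a b where ab: "a < b" "a \<in> I" "b \<in> I"
    and near: "\<And>t. t \<in> {a..b} \<Longrightarrow> \<bar>t - t0\<bar> < e \<and> \<bar>\<rho> t - \<rho> t0\<bar> < e"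
    using exists_interval_near[OF I nontrivial cont t0] by meson
  consider "t0 < \<rho> t0" | "\<rho> t0 < t0" using off by linarith
  then have "(\<forall>t\<in>{a..b}. b < \<rho> t) \<or> (\<forall>t\<in>{a..b}. \<rho> t < a)"
  proof cases
    case 1
    have "b < \<rho> t" if "t \<in> {a..b}" for t
      using near[OF that] near[of b] ab(1) 1 unfolding e_def by (simp add: abs_if split: if_splits)
    then show ?thesis by blast
  next
    case 2
    have "\<rho> t < a" if "t \<in> {a..b}" for t
      using near[OF that] near[of a] ab(1) 2 unfolding e_def by (simp add: abs_if split: if_splits)
    then show ?thesis by blast
  qed
  with ab show ?thesis by blast
qed

lemma ratio_eq_if_two_point_Lambda_bounded:
  assumes I: "is_interval I" and nontrivial: "\<exists>a\<in>I. \<exists>b\<in>I. a < b"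
    and f: "has_second_derivative_on f f' f'' I" and g: "has_second_derivative_on g g' g'' I"
    and f2c: "continuous_on I f''" and g2c: "continuous_on I g''"
    and g_pos: "\<And>t. t \<in> I \<Longrightarrow> g'' t > 0"
    and bounded: "\<And>a b. a < b \<Longrightarrow> a \<in> I \<Longrightarrow> b \<in> I \<Longrightarrow>
       a \<le> Lambda f g 2 (\<lambda>_. 1/2) (\<lambda>i. if i = 0 then a else b) \<and>
       Lambda f g 2 (\<lambda>_. 1/2) (\<lambda>i. if i = 0 then a else b) \<le> b"
    and t0: "t0 \<in> I"
  shows "f'' t0 = t0 * g'' t0"
proof (rule ccontr)
  define \<rho> where "\<rho> t = f'' t / g'' t" for t
  have ratio: "f'' t = \<rho> t * g'' t" if "t \<in> I" for t
    using g_pos[OF that] unfolding \<rho>_def by simp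
  assume "f'' t0 \<noteq> t0 * g'' t0"
  then have "\<rho> t0 \<noteq> t0" using ratio[OF t0] by auto
  moreover have "continuous_on I \<rho>"
    unfolding \<rho>_def by (intro continuous_on_divide f2c g2c) (use g_pos in fastforce)
  ultimately obtain a b where ab: "a < b" "a \<in> I" "b \<in> I"
    and off: "(\<forall>t\<in>{a..b}. b < \<rho> t) \<or> (\<forall>t\<in>{a..b}. \<rho> t < a)"
    using exists_interval_off_diagonal[OF I nontrivial _ t0] by blast
  have sub: "{a..b} \<subseteq> I" using atLeastAtMost_subset_interval[OF I ab(2,3)] .
  note fS = has_second_derivative_on_subset[OF f sub]
    and gS = has_second_derivative_on_subset[OF g sub]
    and sample = nonconstant_sample_two_points[OF ab(1), of "{a..b}"]
  have interior: "t \<in> {a..b}" "f'' t = \<rho> t * g'' t" "g'' t > 0" if "t \<in> interior {a..b}" for t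
  proof -
    show "t \<in> {a..b}" using that interior_subset by blast
    then have "t \<in> I" using sub by blast
    then show "f'' t = \<rho> t * g'' t" "g'' t > 0" using ratio g_pos by auto
  qed
  from off have "b < Lambda f g 2 (\<lambda>_. 1/2) (\<lambda>i. if i = 0 then a else b) \<or>
      Lambda f g 2 (\<lambda>_. 1/2) (\<lambda>i. if i = 0 then a else b) < a"
  proof (elim disjE)
    assume "\<forall>t\<in>{a..b}. b < \<rho> t"
    then show ?thesis using interior ab(1)
      by (intro disjI1 less_Lambda[OF is_interval_cc fS gS _ _ sample]) (auto simp: mult_strict_right_mono)
  next
    assume "\<forall>t\<in>{a..b}. \<rho> t < a"
    then show ?thesis using interior ab(1)
      by (intro disjI2 Lambda_less[OF is_interval_cc fS gS _ _ sample]) (auto simp: mult_strict_right_mono)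
  qed
  with bounded[OF ab] show False by linarith
qed

theorem theorem2:
  fixes I :: "real set" and f g f' g' f'' g'' :: "real \<Rightarrow> real"
  assumes I_interval: "is_interval I"
    and I_nontrivial: "\<exists>a\<in>I. \<exists>b\<in>I. a < b"
    and f1: "\<And>t. t \<in> I \<Longrightarrow> (f has_real_derivative f' t) (at t within I)"
    and f2: "\<And>t. t \<in> I \<Longrightarrow> (f' has_real_derivative f'' t) (at t within I)"
    and f2c: "continuous_on I f''"
    and g1: "\<And>t. t \<in> I \<Longrightarrow> (g has_real_derivative g' t) (at t within I)"
    and g2: "\<And>t. t \<in> I \<Longrightarrow> (g' has_real_derivative g'' t) (at t within I)"
    and g2c: "continuous_on I g''"
    and g2pos: "\<And>t. t \<in> I \<Longrightarrow> g'' t > 0"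
  shows "(\<forall>n\<ge>2. \<forall>p x. (\<forall>i<n. p i > 0) \<and> (\<Sum>i<n. p i) = 1 \<and> (\<forall>i<n. x i \<in> I)
            \<and> (\<exists>i<n. \<exists>j<n. x i \<noteq> x j) \<longrightarrow>
              Min (x ` {..<n}) \<le> Lambda f g n p x \<and> Lambda f g n p x \<le> Max (x ` {..<n}))
         \<longleftrightarrow> (\<forall>t\<in>I. f'' t = t * g'' t)"
proof -
  have f: "has_second_derivative_on f f' f'' I" and g: "has_second_derivative_on g g' g'' I"
    using f1 f2 g1 g2 unfolding has_second_derivative_on_def by blast+
  show ?thesis
    unfolding nonconstant_sample_def[symmetric]
  proof
    assume bounds: "\<forall>n\<ge>2. \<forall>p x. nonconstant_sample n p x I \<longrightarrow>
      Min (x ` {..<n}) \<le> Lambda f g n p x \<and> Lambda f g n p x \<le> Max (x ` {..<n})"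
    have "a \<le> Lambda f g 2 (\<lambda>_. 1/2) (\<lambda>i. if i = 0 then a else b) \<and>
          Lambda f g 2 (\<lambda>_. 1/2) (\<lambda>i. if i = 0 then a else b) \<le> b"
      if "a < b" "a \<in> I" "b \<in> I" for a b
      using bounds[rule_format, OF _ nonconstant_sample_two_points[OF that]] \<open>a < b\<close>
      unfolding image_two_points by simp
    then show "\<forall>t\<in>I. f'' t = t * g'' t"
      using ratio_eq_if_two_point_Lambda_bounded[OF I_interval I_nontrivial f g f2c g2c g2pos]
      by blast
  next
    assume "\<forall>t\<in>I. f'' t = t * g'' t"
    then show "\<forall>n\<ge>2. \<forall>p x. nonconstant_sample n p x I \<longrightarrow>
      Min (x ` {..<n}) \<le> Lambda f g n p x \<and> Lambda f g n p x \<le> Max (x ` {..<n})"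
      using Min_less_Lambda_less_Max[OF I_interval f g g2pos] by (auto intro: less_imp_le)
  qed
qed

end
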